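(* Let $X \in \{0,1\}$ be a binary random variable and let $Y_x$ be a real-valued random variable (a potential outcome). Suppose that for each $x' \in \{0,1\}$ the conditional distribution of $Y_x$ given $X = x'$ has a cdf that is strictly increasing and continuous on its support. Let $\underline{y}_x$ and $\overline{y}_x$ (possibly $-\infty$ and $+\infty$) denote the lower and upper endpoints of the support of $Y_x$, and let $p(y_x) = \Pr(X=1 \mid Y_x = y_x)$. Let $\mathcal{T} \subseteq \mathbb{R}$. Then $Y_x$ is $\mathcal{T}$-independent of $X$ if and only if \[ \mathbb{E}\big( p(Y_x) \mid Y_x \in (t_1,t_2) \big) = \Pr(X=1) \] for all $t_1, t_2 \in \mathcal{T} \cup \{\underline{y}_x, \overline{y}_x\}$ with $t_1 < t_2$.
   Context: $Y_x$ is called $\mathcal{T}$-independent of $X$ if $F_{Y_x\mid X}(\tau \mid 0) = F_{Y_x \mid X}(\tau \mid 1)$ for all $\tau \in \mathcal{T}$, where $F_{Y_x\mid X}(\cdot\mid x')$ is the conditional cdf of $Y_x$ given $X=x'$. The function $p$ is called the latent propensity score. *)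

theory Defs
  imports "HOL-Probability.Probability"
begin

definition X_event :: "'a measure \<Rightarrow> ('a \<Rightarrow> real) \<Rightarrow> real \<Rightarrow> 'a set" where
  "X_event M X x = {\<omega> \<in> space M. X \<omega> = x}"

definition cond_cdf :: "'a measure \<Rightarrow> ('a \<Rightarrow> real) \<Rightarrow> ('a \<Rightarrow> real) \<Rightarrow> real \<Rightarrow> real \<Rightarrow> real" where
  "cond_cdf M X Y x \<tau> =
     measure M {\<omega> \<in> space M. Y \<omega> \<le> \<tau> \<and> X \<omega> = x} / measure M (X_event M X x)"

definition T_independent :: "'a measure \<Rightarrow> ('a \<Rightarrow> real) \<Rightarrow> ('a \<Rightarrow> real) \<Rightarrow> real set \<Rightarrow> bool" where
  "T_independent M X Y T \<longleftrightarrow> (\<forall>\<tau>\<in>T. cond_cdf M X Y 0 \<tau> = cond_cdf M X Y 1 \<tau>)"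

definition dist_support :: "'a measure \<Rightarrow> ('a \<Rightarrow> real) \<Rightarrow> real set" where
  "dist_support M Y = {y. \<forall>e>0. measure M {\<omega> \<in> space M. Y \<omega> \<in> ball y e} > 0}"

definition cond_support :: "'a measure \<Rightarrow> ('a \<Rightarrow> real) \<Rightarrow> ('a \<Rightarrow> real) \<Rightarrow> real \<Rightarrow> real set" where
  "cond_support M X Y x =
     {y. \<forall>e>0. measure M {\<omega> \<in> space M. Y \<omega> \<in> ball y e \<and> X \<omega> = x} > 0}"

definition supp_lower :: "'a measure \<Rightarrow> ('a \<Rightarrow> real) \<Rightarrow> ereal" where
  "supp_lower M Y = Inf (ereal ` dist_support M Y)"

definition supp_upper :: "'a measure \<Rightarrow> ('a \<Rightarrow> real) \<Rightarrow> ereal" where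
  "supp_upper M Y = Sup (ereal ` dist_support M Y)"

text \<open>p is (a version of) the latent propensity score p(y) = Pr(X = 1 | Y = y):
  a Borel function with p(Y) integrable and
  E[p(Y) 1{Y \<in> B}] = Pr(X = 1, Y \<in> B) for every Borel set B.\<close>
definition latent_pscore :: "'a measure \<Rightarrow> ('a \<Rightarrow> real) \<Rightarrow> ('a \<Rightarrow> real) \<Rightarrow> (real \<Rightarrow> real) \<Rightarrow> bool" where
  "latent_pscore M X Y p \<longleftrightarrow>
     p \<in> borel_measurable borel \<and> (\<forall>y. 0 \<le> p y \<and> p y \<le> 1) \<and>
     integrable M (\<lambda>\<omega>. p (Y \<omega>)) \<and>
     (\<forall>B \<in> sets borel.
        (\<integral>\<omega>. indicator {\<omega> \<in> space M. Y \<omega> \<in> B} \<omega> * p (Y \<omega>) \<partial>M)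
          = measure M {\<omega> \<in> space M. X \<omega> = 1 \<and> Y \<omega> \<in> B})"

definition cond_exp_event :: "'a measure \<Rightarrow> ('a \<Rightarrow> real) \<Rightarrow> 'a set \<Rightarrow> real" where
  "cond_exp_event M f A = (\<integral>\<omega>. indicator A \<omega> * f \<omega> \<partial>M) / measure M A"

definition Y_in_open :: "'a measure \<Rightarrow> ('a \<Rightarrow> real) \<Rightarrow> ereal \<Rightarrow> ereal \<Rightarrow> 'a set" where
  "Y_in_open M Y t1 t2 = {\<omega> \<in> space M. t1 < ereal (Y \<omega>) \<and> ereal (Y \<omega>) < t2}"

end

theory Submission
  imports Defs
begin

(*
  Write pi = P(X = 1), F(t) = P(Y <= t) and G(t) = P(X = 1, Y <= t). The conditional cdfs of
  Y given X = 1 and X = 0 are G / pi and (F - G) / (1 - pi), so T-independence says exactly that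
  G(t) - pi F(t), the covariance of the indicators of X = 1 and Y <= t, vanishes on T.
  Continuity of the conditional cdfs forces Y to be atomless, so across an interval (t1, t2) this
  covariance increases by P(X = 1, t1 < Y < t2) - pi P(t1 < Y < t2), which by the defining
  property of the latent propensity score equals P(t1 < Y < t2) (E(p(Y) | t1 < Y < t2) - pi).
  The covariance vanishes at both (extended real) endpoints of the support of Y and below the
  lower one, so it vanishes on T iff all intervals between points of T and the two endpoints are
  balanced.
*)

context finite_measure
begin

lemma measure_eq_0_if_isCont_cdf:
  fixes Y :: "'a \<Rightarrow> real"
  assumes [measurable]: "Y \<in> borel_measurable M" "Measurable.pred M P"
    and cont: "isCont (\<lambda>t. measure M {\<omega> \<in> space M. Y \<omega> \<le> t \<and> P \<omega>}) a"
  shows "measure M {\<omega> \<in> space M. Y \<omega> = a \<and> P \<omega>} = 0"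
proof -
  define C where "C t = measure M {\<omega> \<in> space M. Y \<omega> \<le> t \<and> P \<omega>}" for t
  let ?A = "{\<omega> \<in> space M. Y \<omega> = a \<and> P \<omega>}"
  have jump: "C t \<le> C a - measure M ?A" if "t < a" for t
  proof -
    have "C t + measure M ?A = measure M ({\<omega> \<in> space M. Y \<omega> \<le> t \<and> P \<omega>} \<union> ?A)"
      unfolding C_def using that by (subst finite_measure_Union) auto
    also have "\<dots> \<le> C a"
      unfolding C_def using that by (intro finite_measure_mono) auto
    finally show ?thesis by simp
  qed
  have "(C \<longlongrightarrow> C a) (at_left a)"
    using cont unfolding C_def isCont_def filterlim_at_split by simp
  then have "C a \<le> C a - measure M ?A"
    by (rule tendsto_upperbound)
      (use jump eventually_at_left_real[of "a - 1" a] in \<open>auto elim!: eventually_mono\<close>)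
  then show ?thesis
    using measure_nonneg[of M ?A] by simp
qed

lemma mem_cond_supportI:
  assumes [measurable]: "X \<in> borel_measurable M" "Y \<in> borel_measurable M"
    and pos: "measure M {\<omega> \<in> space M. Y \<omega> = a \<and> X \<omega> = x} > 0"
  shows "a \<in> cond_support M X Y x"
  unfolding cond_support_def
proof (intro CollectI allI impI)
  fix e :: real
  assume "e > 0"
  then have "measure M {\<omega> \<in> space M. Y \<omega> = a \<and> X \<omega> = x}
      \<le> measure M {\<omega> \<in> space M. Y \<omega> \<in> ball a e \<and> X \<omega> = x}"
    by (intro finite_measure_mono) auto
  with pos show "measure M {\<omega> \<in> space M. Y \<omega> \<in> ball a e \<and> X \<omega> = x} > 0"
    by linarith
qed

lemma measure_outside_dist_support:
  fixes Y :: "'a \<Rightarrow> real"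
  assumes [measurable]: "Y \<in> borel_measurable M"
    and "open S" and disjoint: "S \<inter> dist_support M Y = {}"
  shows "measure M {\<omega> \<in> space M. Y \<omega> \<in> S} = 0"
proof -
  define \<F> where "\<F> = {ball y e | y e. e > 0 \<and> measure M {\<omega> \<in> space M. Y \<omega> \<in> ball y e} = 0}"
  have "\<And>B. B \<in> \<F> \<Longrightarrow> open B"
    unfolding \<F>_def by auto
  then obtain \<F>' where \<F>': "\<F>' \<subseteq> \<F>" "countable \<F>'" "\<Union>\<F>' = \<Union>\<F>"
    by (rule Lindelof)
  have "S \<subseteq> \<Union>\<F>"
  proof
    fix y
    assume "y \<in> S"
    with disjoint obtain e where "e > 0" "\<not> measure M {\<omega> \<in> space M. Y \<omega> \<in> ball y e} > 0"
      unfolding dist_support_def by blast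
    then have "measure M {\<omega> \<in> space M. Y \<omega> \<in> ball y e} = 0"
      using measure_nonneg[of M "{\<omega> \<in> space M. Y \<omega> \<in> ball y e}"] by linarith
    with \<open>e > 0\<close> have "ball y e \<in> \<F>"
      unfolding \<F>_def by blast
    with \<open>e > 0\<close> show "y \<in> \<Union>\<F>"
      by (meson UnionI centre_in_ball)
  qed
  have "(\<Union>B\<in>\<F>'. {\<omega> \<in> space M. Y \<omega> \<in> B}) \<in> null_sets M"
  proof (rule null_sets_UN')
    fix B
    assume "B \<in> \<F>'"
    with \<F>'(1) obtain y e where "B = ball y e" "measure M {\<omega> \<in> space M. Y \<omega> \<in> B} = 0"
      unfolding \<F>_def by blast
    then show "{\<omega> \<in> space M. Y \<omega> \<in> B} \<in> null_sets M"
      by (simp add: emeasure_eq_measure null_setsI)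
  qed (fact \<F>'(2))
  moreover have "S \<in> sets borel"
    using \<open>open S\<close> by simp
  then have "{\<omega> \<in> space M. Y \<omega> \<in> S} \<in> sets M"
    by measurable
  moreover have "{\<omega> \<in> space M. Y \<omega> \<in> S} \<subseteq> (\<Union>B\<in>\<F>'. {\<omega> \<in> space M. Y \<omega> \<in> B})"
    using \<open>S \<subseteq> \<Union>\<F>\<close> \<F>'(3) by blast
  ultimately have "{\<omega> \<in> space M. Y \<omega> \<in> S} \<in> null_sets M"
    by (rule null_sets_subset)
  then show ?thesis
    by (simp add: measure_eq_0_null_sets)
qed

lemma measure_below_supp_lower:
  fixes Y :: "'a \<Rightarrow> real"
  assumes [measurable]: "Y \<in> borel_measurable M" and "t \<le> supp_lower M Y"
  shows "measure M {\<omega> \<in> space M. ereal (Y \<omega>) < t} = 0"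
proof -
  have "open {y. ereal y < t}"
    by (cases t) (simp_all add: open_lessThan[unfolded lessThan_def])
  moreover have "{y. ereal y < t} \<inter> dist_support M Y = {}"
  proof -
    have "t \<le> ereal y" if "y \<in> dist_support M Y" for y
      using \<open>t \<le> supp_lower M Y\<close> Inf_lower[OF imageI[OF that]]
      unfolding supp_lower_def by (rule order_trans)
    then show ?thesis
      by (auto simp: not_less[symmetric])
  qed
  ultimately show ?thesis
    using measure_outside_dist_support[of Y "{y. ereal y < t}"] by simp
qed

lemma measure_above_supp_upper:
  fixes Y :: "'a \<Rightarrow> real"
  assumes [measurable]: "Y \<in> borel_measurable M" and "supp_upper M Y \<le> t"
  shows "measure M {\<omega> \<in> space M. t < ereal (Y \<omega>)} = 0"
proof -
  have "open {y. t < ereal y}"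
    by (cases t) (simp_all add: open_greaterThan[unfolded greaterThan_def])
  moreover have "{y. t < ereal y} \<inter> dist_support M Y = {}"
  proof -
    have "ereal y \<le> t" if "y \<in> dist_support M Y" for y
      using Sup_upper[OF imageI[OF that]] \<open>supp_upper M Y \<le> t\<close>
      unfolding supp_upper_def by (rule order_trans)
    then show ?thesis
      by (auto simp: not_less[symmetric])
  qed
  ultimately show ?thesis
    using measure_outside_dist_support[of Y "{y. t < ereal y}"] by simp
qed

lemma measure_le_eq_measure_less_if_atomless:
  fixes Y :: "'a \<Rightarrow> real"
  assumes [measurable]: "Y \<in> borel_measurable M" "Measurable.pred M P"
    and atomless: "\<And>a. measure M {\<omega> \<in> space M. Y \<omega> = a} = 0"
  shows "measure M {\<omega> \<in> space M. ereal (Y \<omega>) \<le> t \<and> P \<omega>}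
    = measure M {\<omega> \<in> space M. ereal (Y \<omega>) < t \<and> P \<omega>}"
proof (cases t)
  case (real r)
  have "measure M {\<omega> \<in> space M. Y \<omega> = r \<and> P \<omega>} \<le> measure M {\<omega> \<in> space M. Y \<omega> = r}"
    by (intro finite_measure_mono) auto
  then have atom: "measure M {\<omega> \<in> space M. Y \<omega> = r \<and> P \<omega>} = 0"
    using atomless[of r] measure_nonneg[of M] by (simp add: antisym)
  have "{\<omega> \<in> space M. ereal (Y \<omega>) \<le> t \<and> P \<omega>}
      = {\<omega> \<in> space M. ereal (Y \<omega>) < t \<and> P \<omega>} \<union> {\<omega> \<in> space M. Y \<omega> = r \<and> P \<omega>}"
    using real by auto
  also have "measure M \<dots> = measure M {\<omega> \<in> space M. ereal (Y \<omega>) < t \<and> P \<omega>}"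
    using real atom by (subst finite_measure_Union) auto
  finally show ?thesis .
qed auto

lemma measure_open_interval_if_atomless:
  fixes Y :: "'a \<Rightarrow> real"
  assumes [measurable]: "Y \<in> borel_measurable M" "Measurable.pred M P"
    and atomless: "\<And>a. measure M {\<omega> \<in> space M. Y \<omega> = a} = 0"
    and "t1 < t2"
  shows "measure M {\<omega> \<in> space M. t1 < ereal (Y \<omega>) \<and> ereal (Y \<omega>) < t2 \<and> P \<omega>}
    = measure M {\<omega> \<in> space M. ereal (Y \<omega>) \<le> t2 \<and> P \<omega>}
      - measure M {\<omega> \<in> space M. ereal (Y \<omega>) \<le> t1 \<and> P \<omega>}"
proof -
  have "{\<omega> \<in> space M. t1 < ereal (Y \<omega>) \<and> ereal (Y \<omega>) < t2 \<and> P \<omega>}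
      = {\<omega> \<in> space M. ereal (Y \<omega>) < t2 \<and> P \<omega>} - {\<omega> \<in> space M. ereal (Y \<omega>) \<le> t1 \<and> P \<omega>}"
    using \<open>t1 < t2\<close> by auto
  also have "measure M \<dots> = measure M {\<omega> \<in> space M. ereal (Y \<omega>) < t2 \<and> P \<omega>}
      - measure M {\<omega> \<in> space M. ereal (Y \<omega>) \<le> t1 \<and> P \<omega>}"
    using \<open>t1 < t2\<close> by (subst finite_measure_Diff) auto
  finally show ?thesis
    using measure_le_eq_measure_less_if_atomless[OF assms(1-3)] by simp
qed

lemma measure_Int_eq_mult_iff:
  assumes "A \<in> sets M"
  shows "measure M (A \<inter> B) = c * measure M A
    \<longleftrightarrow> (measure M A > 0 \<longrightarrow> measure M (A \<inter> B) / measure M A = c)"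
proof (cases "measure M A = 0")
  case True
  moreover have "measure M (A \<inter> B) \<le> measure M A"
    using assms by (intro finite_measure_mono) auto
  ultimately show ?thesis
    using measure_nonneg[of M "A \<inter> B"] by simp
next
  case False
  then have "measure M A > 0"
    using measure_nonneg[of M A] by linarith
  then show ?thesis
    by (auto simp: field_simps)
qed

end

lemma cond_exp_event_latent_pscore:
  assumes "latent_pscore M X Y p"
  shows "cond_exp_event M (\<lambda>\<omega>. p (Y \<omega>)) (Y_in_open M Y t1 t2)
    = measure M (Y_in_open M Y t1 t2 \<inter> X_event M X 1) / measure M (Y_in_open M Y t1 t2)"
proof -
  define B where "B = {y \<in> space borel. t1 < ereal y \<and> ereal y < t2}"
  have "B \<in> sets borel"
    unfolding B_def by measurable
  then have "(\<integral>\<omega>. indicator {\<omega> \<in> space M. Y \<omega> \<in> B} \<omega> * p (Y \<omega>) \<partial>M)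
      = measure M {\<omega> \<in> space M. X \<omega> = 1 \<and> Y \<omega> \<in> B}"
    using assms unfolding latent_pscore_def by blast
  moreover have "{\<omega> \<in> space M. Y \<omega> \<in> B} = Y_in_open M Y t1 t2"
    and "{\<omega> \<in> space M. X \<omega> = 1 \<and> Y \<omega> \<in> B} = Y_in_open M Y t1 t2 \<inter> X_event M X 1"
    unfolding B_def Y_in_open_def X_event_def by auto
  ultimately show ?thesis
    unfolding cond_exp_event_def by simp
qed

locale binary_treatment = prob_space +
  fixes X Y :: "'a \<Rightarrow> real"
  assumes X_measurable [measurable]: "X \<in> borel_measurable M"
    and Y_measurable [measurable]: "Y \<in> borel_measurable M"
    and X_binary: "\<And>\<omega>. \<omega> \<in> space M \<Longrightarrow> X \<omega> = 0 \<or> X \<omega> = 1"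
begin

definition treated_share :: real where
  "treated_share = prob (X_event M X 1)"

definition outcome_cov :: "ereal \<Rightarrow> real" where
  "outcome_cov t = prob ({\<omega> \<in> space M. ereal (Y \<omega>) \<le> t} \<inter> X_event M X 1)
     - treated_share * prob {\<omega> \<in> space M. ereal (Y \<omega>) \<le> t}"

lemma X_event_sets [measurable]: "X_event M X x \<in> events"
  unfolding X_event_def by measurable

lemma Y_in_open_sets [measurable]: "Y_in_open M Y t1 t2 \<in> events"
  unfolding Y_in_open_def by measurable

lemma prob_X_event_0: "prob (X_event M X 0) = 1 - treated_share"
proof -
  have "space M = X_event M X 0 \<union> X_event M X 1"
    using X_binary unfolding X_event_def by auto
  then have "prob (X_event M X 0) + prob (X_event M X 1) = 1"
    by (subst finite_measure_Union[symmetric]) (auto simp: X_event_def prob_space)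
  then show ?thesis
    unfolding treated_share_def by simp
qed

lemma T_independent_iff_outcome_cov:
  assumes "0 < treated_share" "treated_share < 1"
  shows "T_independent M X Y T \<longleftrightarrow> (\<forall>\<tau>\<in>T. outcome_cov (ereal \<tau>) = 0)"
proof -
  define F where "F \<tau> = prob {\<omega> \<in> space M. Y \<omega> \<le> \<tau>}" for \<tau>
  define G where "G \<tau> = prob ({\<omega> \<in> space M. Y \<omega> \<le> \<tau>} \<inter> X_event M X 1)" for \<tau>
  have "{\<omega> \<in> space M. Y \<omega> \<le> \<tau> \<and> X \<omega> = 1} = {\<omega> \<in> space M. Y \<omega> \<le> \<tau>} \<inter> X_event M X 1"
    for \<tau>
    unfolding X_event_def by auto
  then have cdf_1: "cond_cdf M X Y 1 \<tau> = G \<tau> / treated_share" for \<tau>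
    unfolding cond_cdf_def G_def treated_share_def by simp
  have "{\<omega> \<in> space M. Y \<omega> \<le> \<tau> \<and> X \<omega> = 0}
      = {\<omega> \<in> space M. Y \<omega> \<le> \<tau>} - {\<omega> \<in> space M. Y \<omega> \<le> \<tau>} \<inter> X_event M X 1" for \<tau>
    using X_binary unfolding X_event_def by auto
  then have cdf_0: "cond_cdf M X Y 0 \<tau> = (F \<tau> - G \<tau>) / (1 - treated_share)" for \<tau>
    unfolding cond_cdf_def F_def G_def prob_X_event_0 by (simp add: finite_measure_Diff)
  have "(F \<tau> - G \<tau>) / (1 - treated_share) = G \<tau> / treated_share
      \<longleftrightarrow> G \<tau> - treated_share * F \<tau> = 0" for \<tau>
    using assms by (auto simp: field_simps)
  then show ?thesis
    unfolding T_independent_def outcome_cov_def cdf_0 cdf_1 F_def G_def by simp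
qed

lemma outcome_cov_eq_0_above_supp_upper:
  assumes "supp_upper M Y \<le> t"
  shows "outcome_cov t = 0"
proof -
  let ?above = "{\<omega> \<in> space M. t < ereal (Y \<omega>)}"
  have above_null: "prob ?above = 0"
    using assms by (rule measure_above_supp_upper[OF Y_measurable])
  have "prob {\<omega> \<in> space M. ereal (Y \<omega>) \<le> t} = prob (space M - ?above)"
    by (rule arg_cong[where f = prob]) auto
  then have all: "prob {\<omega> \<in> space M. ereal (Y \<omega>) \<le> t} = 1"
    using above_null by (simp add: finite_measure_Diff prob_space)
  have "prob ({\<omega> \<in> space M. ereal (Y \<omega>) \<le> t} \<inter> X_event M X 1)
      = prob (X_event M X 1 - ?above \<inter> X_event M X 1)"
    by (rule arg_cong[where f = prob]) (auto simp: X_event_def)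
  also have "\<dots> = treated_share - prob (?above \<inter> X_event M X 1)"
    unfolding treated_share_def by (subst finite_measure_Diff) auto
  also have "prob (?above \<inter> X_event M X 1) = 0"
    using finite_measure_mono[of "?above \<inter> X_event M X 1" ?above] above_null
      measure_nonneg[of M "?above \<inter> X_event M X 1"] by simp
  finally show ?thesis
    unfolding outcome_cov_def all by simp
qed

lemma prob_Y_eq_0_if_cond_cdf_continuous:
  assumes pos: "\<And>x. x \<in> {0, 1} \<Longrightarrow> prob (X_event M X x) > 0"
    and cont: "\<And>x a. x \<in> {0, 1} \<Longrightarrow> a \<in> cond_support M X Y x \<Longrightarrow> isCont (cond_cdf M X Y x) a"
  shows "prob {\<omega> \<in> space M. Y \<omega> = a} = 0"
proof -
  have atom: "prob {\<omega> \<in> space M. Y \<omega> = a \<and> X \<omega> = x} = 0" if x: "x \<in> {0, 1}" for x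
  proof (rule ccontr)
    assume "prob {\<omega> \<in> space M. Y \<omega> = a \<and> X \<omega> = x} \<noteq> 0"
    then have "prob {\<omega> \<in> space M. Y \<omega> = a \<and> X \<omega> = x} > 0"
      using measure_nonneg[of M "{\<omega> \<in> space M. Y \<omega> = a \<and> X \<omega> = x}"] by linarith
    then have "a \<in> cond_support M X Y x"
      by (rule mem_cond_supportI[OF X_measurable Y_measurable])
    with x have "isCont (\<lambda>t. cond_cdf M X Y x t * prob (X_event M X x)) a"
      by (intro continuous_mult_right cont)
    moreover have "cond_cdf M X Y x t * prob (X_event M X x) = prob {\<omega> \<in> space M. Y \<omega> \<le> t \<and> X \<omega> = x}"
      for t
      using pos[OF x] unfolding cond_cdf_def by simp
    ultimately have "isCont (\<lambda>t. prob {\<omega> \<in> space M. Y \<omega> \<le> t \<and> X \<omega> = x}) a"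
      by simp
    then have "prob {\<omega> \<in> space M. Y \<omega> = a \<and> X \<omega> = x} = 0"
      by (rule measure_eq_0_if_isCont_cdf[OF Y_measurable, rotated]) measurable
    with \<open>prob {\<omega> \<in> space M. Y \<omega> = a \<and> X \<omega> = x} \<noteq> 0\<close> show False ..
  qed
  have "{\<omega> \<in> space M. Y \<omega> = a}
      = {\<omega> \<in> space M. Y \<omega> = a \<and> X \<omega> = 0} \<union> {\<omega> \<in> space M. Y \<omega> = a \<and> X \<omega> = 1}"
    using X_binary by auto
  also have "prob \<dots> = 0"
    using atom[of 0] atom[of 1] by (subst finite_measure_Union) auto
  finally show ?thesis .
qed

end

locale atomless_binary_treatment = binary_treatment +
  assumes Y_atomless: "\<And>a. prob {\<omega> \<in> space M. Y \<omega> = a} = 0"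
begin

lemma prob_le_eq_prob_less:
  "prob {\<omega> \<in> space M. ereal (Y \<omega>) \<le> t} = prob {\<omega> \<in> space M. ereal (Y \<omega>) < t}"
  using measure_le_eq_measure_less_if_atomless[of Y "\<lambda>_. True", OF _ _ Y_atomless] by simp

lemma outcome_cov_eq_0_below_supp_lower:
  assumes "t \<le> supp_lower M Y"
  shows "outcome_cov t = 0"
proof -
  have none_below: "prob {\<omega> \<in> space M. ereal (Y \<omega>) \<le> t} = 0"
    unfolding prob_le_eq_prob_less using assms by (rule measure_below_supp_lower[OF Y_measurable])
  moreover have "prob ({\<omega> \<in> space M. ereal (Y \<omega>) \<le> t} \<inter> X_event M X 1)
      \<le> prob {\<omega> \<in> space M. ereal (Y \<omega>) \<le> t}"
    by (intro finite_measure_mono) auto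
  ultimately show ?thesis
    unfolding outcome_cov_def
    using measure_nonneg[of M "{\<omega> \<in> space M. ereal (Y \<omega>) \<le> t} \<inter> X_event M X 1"] by simp
qed

lemma outcome_cov_increment:
  assumes "t1 < t2"
  shows "prob (Y_in_open M Y t1 t2 \<inter> X_event M X 1) - treated_share * prob (Y_in_open M Y t1 t2)
    = outcome_cov t2 - outcome_cov t1"
proof -
  have "Y_in_open M Y t1 t2 \<inter> X_event M X 1
      = {\<omega> \<in> space M. t1 < ereal (Y \<omega>) \<and> ereal (Y \<omega>) < t2 \<and> X \<omega> = 1}"
    and "\<And>t. {\<omega> \<in> space M. ereal (Y \<omega>) \<le> t} \<inter> X_event M X 1
      = {\<omega> \<in> space M. ereal (Y \<omega>) \<le> t \<and> X \<omega> = 1}"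
    unfolding Y_in_open_def X_event_def by auto
  then have treated: "prob (Y_in_open M Y t1 t2 \<inter> X_event M X 1)
      = prob ({\<omega> \<in> space M. ereal (Y \<omega>) \<le> t2} \<inter> X_event M X 1)
        - prob ({\<omega> \<in> space M. ereal (Y \<omega>) \<le> t1} \<inter> X_event M X 1)"
    using measure_open_interval_if_atomless[OF Y_measurable _ Y_atomless assms] by simp
  have all: "prob (Y_in_open M Y t1 t2)
      = prob {\<omega> \<in> space M. ereal (Y \<omega>) \<le> t2} - prob {\<omega> \<in> space M. ereal (Y \<omega>) \<le> t1}"
    using measure_open_interval_if_atomless[OF Y_measurable _ Y_atomless assms, of "\<lambda>_. True"]
    unfolding Y_in_open_def by simp
  show ?thesis
    unfolding outcome_cov_def treated all by (simp add: algebra_simps)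
qed

lemma T_independent_iff_balanced_intervals:
  fixes T :: "real set"
  assumes "0 < treated_share" "treated_share < 1"
  defines "E \<equiv> ereal ` T \<union> {supp_lower M Y, supp_upper M Y}"
  shows "T_independent M X Y T \<longleftrightarrow> (\<forall>t1 t2. t1 \<in> E \<and> t2 \<in> E \<and> t1 < t2 \<longrightarrow>
    prob (Y_in_open M Y t1 t2 \<inter> X_event M X 1) = treated_share * prob (Y_in_open M Y t1 t2))"
    (is "_ \<longleftrightarrow> (\<forall>t1 t2. t1 \<in> E \<and> t2 \<in> E \<and> t1 < t2 \<longrightarrow> ?balanced t1 t2)")
proof -
  have balanced_iff: "?balanced t1 t2 \<longleftrightarrow> outcome_cov t1 = outcome_cov t2" if "t1 < t2" for t1 t2
    using outcome_cov_increment[OF that] by linarith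
  have cov_lower: "outcome_cov (supp_lower M Y) = 0"
    by (rule outcome_cov_eq_0_below_supp_lower) simp
  have cov_upper: "outcome_cov (supp_upper M Y) = 0"
    by (rule outcome_cov_eq_0_above_supp_upper) simp
  show ?thesis
    unfolding T_independent_iff_outcome_cov[OF assms(1,2)]
  proof (intro iffI allI impI ballI)
    fix t1 t2
    assume "\<forall>\<tau>\<in>T. outcome_cov (ereal \<tau>) = 0" and t12: "t1 \<in> E \<and> t2 \<in> E \<and> t1 < t2"
    then have "outcome_cov t = 0" if "t \<in> E" for t
      using that cov_lower cov_upper unfolding E_def by auto
    with t12 show "?balanced t1 t2"
      using balanced_iff by simp
  next
    fix \<tau>
    assume balanced: "\<forall>t1 t2. t1 \<in> E \<and> t2 \<in> E \<and> t1 < t2 \<longrightarrow> ?balanced t1 t2"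
      and "\<tau> \<in> T"
    show "outcome_cov (ereal \<tau>) = 0"
    proof (cases "supp_lower M Y < ereal \<tau>")
      case True
      moreover have "supp_lower M Y \<in> E" "ereal \<tau> \<in> E"
        unfolding E_def using \<open>\<tau> \<in> T\<close> by auto
      ultimately have "?balanced (supp_lower M Y) (ereal \<tau>)"
        using balanced by blast
      with True cov_lower show ?thesis
        using balanced_iff by simp
    next
      case False
      then show ?thesis
        by (intro outcome_cov_eq_0_below_supp_lower) simp
    qed
  qed
qed

end

theorem theorem1:
  fixes M :: "'a measure" and X Y :: "'a \<Rightarrow> real" and p :: "real \<Rightarrow> real"
    and T :: "real set"
  assumes "prob_space M"
    and "X \<in> borel_measurable M" and "Y \<in> borel_measurable M"
    and "\<forall>\<omega>\<in>space M. X \<omega> \<in> {0, 1}"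
    and "measure M (X_event M X 0) > 0" and "measure M (X_event M X 1) > 0"
    and "\<forall>x\<in>{0, 1}. \<forall>a\<in>cond_support M X Y x. \<forall>b\<in>cond_support M X Y x.
           a < b \<longrightarrow> cond_cdf M X Y x a < cond_cdf M X Y x b"
    and "\<forall>x\<in>{0, 1}. \<forall>a\<in>cond_support M X Y x. isCont (cond_cdf M X Y x) a"
    and "latent_pscore M X Y p"
  shows "T_independent M X Y T \<longleftrightarrow>
    (\<forall>t1 t2. t1 \<in> ereal ` T \<union> {supp_lower M Y, supp_upper M Y}
        \<and> t2 \<in> ereal ` T \<union> {supp_lower M Y, supp_upper M Y}
        \<and> t1 < t2 \<and> measure M (Y_in_open M Y t1 t2) > 0
      \<longrightarrow> cond_exp_event M (\<lambda>\<omega>. p (Y \<omega>)) (Y_in_open M Y t1 t2) = measure M (X_event M X 1))"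
proof -
  interpret binary_treatment M X Y
    using assms(1-4) by (auto simp: binary_treatment_def binary_treatment_axioms_def)
  have "prob {\<omega> \<in> space M. Y \<omega> = a} = 0" for a
    using assms(5,6,8) by (intro prob_Y_eq_0_if_cond_cdf_continuous) auto
  then interpret atomless_binary_treatment M X Y
    by unfold_locales
  have share: "0 < treated_share" "treated_share < 1"
    using assms(5,6) prob_X_event_0 unfolding treated_share_def by auto
  show ?thesis
    unfolding T_independent_iff_balanced_intervals[OF share] cond_exp_event_latent_pscore[OF assms(9)]
      measure_Int_eq_mult_iff[OF Y_in_open_sets] treated_share_def
    by (simp only: imp_conjL)
qed

end
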